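(* For every program $p$, environment $\sigma$ and time instant $t\in\mathbb{R}_{\ge0}$, at most one of the reduction rules of the small-step semantics is applicable to $(p,\sigma,t)$.
   Context: Syntax. Fix variables $\mathcal{X}=\{x_1,\dots,x_n\}$. Linear terms: $s::= r\mid r\cdot x\mid s_1+s_2$ ($r\in\mathbb{R}$, $x\in\mathcal{X}$). Atomic programs: assignments $x:=s$ and differential statements $\bar x'=\bar u\ \mathtt{for}\ s$ (i.e. $x_1'=u_1,\dots,x_n'=u_n\ \mathtt{for}\ s$). Programs: $p::= a\mid p;q\mid \mathtt{if}\ b\ \mathtt{then}\ p\ \mathtt{else}\ q\mid \mathtt{while}\ b\ \mathtt{do}\ p$, with $a$ atomic and $b$ in the free Boolean algebra generated by atoms $s_1\le s_2$, $s_1\ge s_2$. Environments $\sigma\colon\mathcal{X}\to\mathbb{R}$; $s\sigma$, $b\sigma$ evaluation; $\sigma\triangledown[\bar v/\bar x]$ update; $\phi_\sigma\colon[0,\infty)\to\mathbb{R}^n$ the solution of $\bar x'=\bar u$ with initial value $(\sigma(x_i))_i$. The small-step semantics consists of the following rules on triples $(p,\sigma,t)$ ($p$ a program or $\mathit{skip}$/$\mathit{stop}$, $t\in\mathbb{R}_{\ge0}$): (asg) $(x:=s,\sigma,t)\to(\mathit{skip},\sigma\triangledown[s\sigma/x],t)$; (diff-stop) $(\bar x'=\bar u\ \mathtt{for}\ s,\sigma,t)\to(\mathit{stop},\sigma\triangledown[\phi_\sigma(t)/\bar x],0)$ if $t<s\sigma$; (diff-skip) $(\bar x'=\bar u\ \mathtt{for}\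 s,\sigma,t)\to(\mathit{skip},\sigma\triangledown[\phi_\sigma(s\sigma)/\bar x],t-s\sigma)$ if $t\ge s\sigma$; (if-true/if-false) $(\mathtt{if}\ b\ \mathtt{then}\ p\ \mathtt{else}\ q,\sigma,t)\to(p,\sigma,t)$ if $b\sigma=\top$, $\to(q,\sigma,t)$ if $b\sigma=\bot$; (wh-true) $(\mathtt{while}\ b\ \mathtt{do}\ p,\sigma,t)\to(p;\mathtt{while}\ b\ \mathtt{do}\ p,\sigma,t)$ if $b\sigma=\top$; (wh-false) $(\mathtt{while}\ b\ \mathtt{do}\ p,\sigma,t)\to(\mathit{skip},\sigma,t)$ if $b\sigma=\bot$; (seq-stop) from $(p,\sigma,t)\to(\mathit{stop},\sigma',t')$ infer $(p;q,\sigma,t)\to(\mathit{stop},\sigma',t')$; (seq-skip) from $(p,\sigma,t)\to(\mathit{skip},\sigma',t')$ infer $(p;q,\sigma,t)\to(q,\sigma',t')$; (seq) from $(p,\sigma,t)\to(p',\sigma',t')$ with $p'\notin\{\mathit{skip},\mathit{stop}\}$ infer $(p;q,\sigma,t)\to(p';q,\sigma',t')$. *)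

theory Defs
  imports Complex_Main
begin

datatype 'v lterm = Const real | Mul real 'v | Plus "'v lterm" "'v lterm"

primrec leval :: "'v lterm \<Rightarrow> ('v \<Rightarrow> real) \<Rightarrow> real" where
  "leval (Const r) \<sigma> = r"
| "leval (Mul r x) \<sigma> = r * \<sigma> x"
| "leval (Plus s1 s2) \<sigma> = leval s1 \<sigma> + leval s2 \<sigma>"

datatype 'v bexp = Le "'v lterm" "'v lterm" | Ge "'v lterm" "'v lterm"
  | BTrue | BFalse | BNot "'v bexp" | BAnd "'v bexp" "'v bexp" | BOr "'v bexp" "'v bexp"

primrec beval :: "'v bexp \<Rightarrow> ('v \<Rightarrow> real) \<Rightarrow> bool" where
  "beval (Le s1 s2) \<sigma> = (leval s1 \<sigma> \<le> leval s2 \<sigma>)"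
| "beval (Ge s1 s2) \<sigma> = (leval s1 \<sigma> \<ge> leval s2 \<sigma>)"
| "beval BTrue \<sigma> = True"
| "beval BFalse \<sigma> = False"
| "beval (BNot b) \<sigma> = (\<not> beval b \<sigma>)"
| "beval (BAnd b1 b2) \<sigma> = (beval b1 \<sigma> \<and> beval b2 \<sigma>)"
| "beval (BOr b1 b2) \<sigma> = (beval b1 \<sigma> \<or> beval b2 \<sigma>)"

text \<open>Programs. Diff u s is the differential statement x_i' = u x_i (for all variables) for s.\<close>
datatype 'v prog =
    Asg 'v "'v lterm"
  | Diff "'v \<Rightarrow> 'v lterm" "'v lterm"
  | Seq "'v prog" "'v prog"
  | If "'v bexp" "'v prog" "'v prog"
  | While "'v bexp" "'v prog"

datatype 'v cmd = P "'v prog" | Skip | Stop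

definition is_sol :: "('v \<Rightarrow> 'v lterm) \<Rightarrow> ('v \<Rightarrow> real) \<Rightarrow> (real \<Rightarrow> 'v \<Rightarrow> real) \<Rightarrow> bool" where
  "is_sol u \<sigma> \<phi> \<longleftrightarrow> \<phi> 0 = \<sigma> \<and>
     (\<forall>\<tau>\<ge>0. \<forall>i. ((\<lambda>r. \<phi> r i) has_real_derivative leval (u i) (\<phi> \<tau>)) (at \<tau> within {0..}))"

definition sol :: "('v \<Rightarrow> 'v lterm) \<Rightarrow> ('v \<Rightarrow> real) \<Rightarrow> real \<Rightarrow> 'v \<Rightarrow> real" where
  "sol u \<sigma> = (SOME \<phi>. is_sol u \<sigma> \<phi>)"

datatype rule = R_asg | R_diff_stop | R_diff_skip | R_if_true | R_if_false
  | R_wh_true | R_wh_false | R_seq_stop | R_seq_skip | R_seq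

text \<open>step r c c': configuration c reduces to c' by a derivation whose last rule is r.\<close>
inductive step :: "rule \<Rightarrow> 'v cmd \<times> ('v \<Rightarrow> real) \<times> real \<Rightarrow> 'v cmd \<times> ('v \<Rightarrow> real) \<times> real \<Rightarrow> bool" where
  asg: "step R_asg (P (Asg x s), \<sigma>, t) (Skip, \<sigma>(x := leval s \<sigma>), t)"
| diff_stop: "t < leval s \<sigma> \<Longrightarrow> step R_diff_stop (P (Diff u s), \<sigma>, t) (Stop, sol u \<sigma> t, 0)"
| diff_skip: "t \<ge> leval s \<sigma> \<Longrightarrow>
    step R_diff_skip (P (Diff u s), \<sigma>, t) (Skip, sol u \<sigma> (leval s \<sigma>), t - leval s \<sigma>)"
| if_true: "beval b \<sigma> \<Longrightarrow> step R_if_true (P (If b p q), \<sigma>, t) (P p, \<sigma>, t)"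
| if_false: "\<not> beval b \<sigma> \<Longrightarrow> step R_if_false (P (If b p q), \<sigma>, t) (P q, \<sigma>, t)"
| wh_true: "beval b \<sigma> \<Longrightarrow> step R_wh_true (P (While b p), \<sigma>, t) (P (Seq p (While b p)), \<sigma>, t)"
| wh_false: "\<not> beval b \<sigma> \<Longrightarrow> step R_wh_false (P (While b p), \<sigma>, t) (Skip, \<sigma>, t)"
| seq_stop: "step r (P p, \<sigma>, t) (Stop, \<sigma>', t') \<Longrightarrow>
    step R_seq_stop (P (Seq p q), \<sigma>, t) (Stop, \<sigma>', t')"
| seq_skip: "step r (P p, \<sigma>, t) (Skip, \<sigma>', t') \<Longrightarrow>
    step R_seq_skip (P (Seq p q), \<sigma>, t) (P q, \<sigma>', t')"
| seq: "step r (P p, \<sigma>, t) (P p', \<sigma>', t') \<Longrightarrow>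
    step R_seq (P (Seq p q), \<sigma>, t) (P (Seq p' q), \<sigma>', t')"

definition applicable :: "rule \<Rightarrow> 'v prog \<Rightarrow> ('v \<Rightarrow> real) \<Rightarrow> real \<Rightarrow> bool" where
  "applicable r p \<sigma> t \<longleftrightarrow> (\<exists>c'. step r (P p, \<sigma>, t) c')"

end

theory Submission
  imports Defs
begin

text \<open>The side conditions of the two rules for a differential statement
  (t < s\<sigma> versus t \<ge> s\<sigma>), of the two if-rules and of the two while-rules are
  complementary, and every other atomic program has a single rule. The three rules
  for p;q are told apart by whether the premise step of p ends in stop, skip or a
  program; so induction on derivations shows that the rule and the successor
  configuration are both unique.\<close>

lemma step_deterministic:
  assumes "step r1 c c1" and "step r2 c c2"
  shows "r1 = r2 \<and> c1 = c2"
  using assms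
proof (induction arbitrary: r2 c2 rule: step.induct)
  case (seq_stop r p \<sigma> t \<sigma>' t' q)
  from seq_stop.prems show ?case
    by (cases rule: step.cases) (auto dest: seq_stop.IH)
next
  case (seq_skip r p \<sigma> t \<sigma>' t' q)
  from seq_skip.prems show ?case
    by (cases rule: step.cases) (auto dest: seq_skip.IH)
next
  case (seq r p \<sigma> t p' \<sigma>' t' q)
  from seq.prems show ?case
    by (cases rule: step.cases) (auto dest: seq.IH)
qed (erule step.cases; auto)+

theorem theorem1:
  fixes p :: "'v::finite prog" and \<sigma> :: "'v \<Rightarrow> real" and t :: real
  assumes "t \<ge> 0"
  shows "\<forall>r1 r2. applicable r1 p \<sigma> t \<and> applicable r2 p \<sigma> t \<longrightarrow> r1 = r2"
  unfolding applicable_def using step_deterministic by blast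

end
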